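(* Let $n>1$, $m\ge1$ and let $v\in Z_{n,m}$ with $\operatorname{Piv}(v)=\{-1,m+1\}$. Then $\operatorname{ps}_{m+1}(v)=\sum_{i=0}^{m+1}i\,v_i$, $\operatorname{ps}_{-1}(v)=\sum_{i=0}^{m+1}(m+1-i)v_i$, and $d(v,0)\leq\lfloor\frac{n(m+1)}{2}\rfloor$.
   Context: Elements of $\mathbb{Z}_n$ are identified with representatives in $\{0,\dots,n-1\}$ (so $v_0,v_{m+1}$ are such integers in sums). $Z_{n,m}$ has vertices $u=(u_0,\dots,u_{m+1})\in\mathbb{Z}_n\times\{-1,0,1\}^m\times\mathbb{Z}_n$ with $\sum u_i\equiv0\pmod n$. A step from $v$ to $u$ is a left shift at $i$ ($0\le i\le m$) if $u_j=v_j$ for $j\notin\{i,i+1\}$, $u_i=v_i+1$, $u_{i+1}=v_{i+1}-1$, and a right shift at $i$ if $u_i=v_i-1$, $u_{i+1}=v_{i+1}+1$ (arithmetic in coordinates $0,m+1$ in $\mathbb{Z}_n$); vertices are adjacent iff related by such a shift. $d$ is graph distance, $0$ the all-zero vertex. $\operatorname{Piv}(v)$ is the set of integers $-1\le p\le m+1$ with $n\mid\sum_{i=0}^p v_i$ (empty sum $=0$). For a path $P$ from $v$ to $0$: $0\le p\le m$ is a wall if no step is a shift at $p$; $-1$ is a wall if no step is a left shift at $0$; $m+1$ is a wall if no step is a right shift at $m$. $\operatorname{ps}_p(v)$ is the minimum length of a path from $v$ to $0$ having $p$ as a wall. *)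

theory Defs
  imports Main "HOL-Library.Extended_Real"
begin

(* Vertices of Z_{n,m}: functions nat => int, coordinates 0..m+1, zero beyond m+1.
   Coordinates 0 and m+1 are representatives in {0..n-1}. *)
definition Zv :: "nat \<Rightarrow> nat \<Rightarrow> (nat \<Rightarrow> int) set" where
  "Zv n m = {v. v 0 \<in> {0..<int n} \<and> v (m+1) \<in> {0..<int n}
     \<and> (\<forall>i\<in>{1..m}. v i \<in> {-1,0,1}) \<and> (\<forall>i>m+1. v i = 0)
     \<and> int n dvd (\<Sum>i\<le>m+1. v i)}"

definition zerov :: "nat \<Rightarrow> int" where "zerov = (\<lambda>_. 0)"

definition cadd :: "nat \<Rightarrow> nat \<Rightarrow> nat \<Rightarrow> int \<Rightarrow> int" where
  "cadd n m j x = (if j = 0 \<or> j = m+1 then x mod int n else x)"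

definition left_shift :: "nat \<Rightarrow> nat \<Rightarrow> nat \<Rightarrow> (nat \<Rightarrow> int) \<Rightarrow> (nat \<Rightarrow> int) \<Rightarrow> bool" where
  "left_shift n m i v u \<longleftrightarrow> i \<le> m \<and> (\<forall>j. j \<noteq> i \<and> j \<noteq> i+1 \<longrightarrow> u j = v j)
     \<and> u i = cadd n m i (v i + 1) \<and> u (i+1) = cadd n m (i+1) (v (i+1) - 1)"

definition right_shift :: "nat \<Rightarrow> nat \<Rightarrow> nat \<Rightarrow> (nat \<Rightarrow> int) \<Rightarrow> (nat \<Rightarrow> int) \<Rightarrow> bool" where
  "right_shift n m i v u \<longleftrightarrow> i \<le> m \<and> (\<forall>j. j \<noteq> i \<and> j \<noteq> i+1 \<longrightarrow> u j = v j)
     \<and> u i = cadd n m i (v i - 1) \<and> u (i+1) = cadd n m (i+1) (v (i+1) + 1)"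

definition adj :: "nat \<Rightarrow> nat \<Rightarrow> (nat \<Rightarrow> int) \<Rightarrow> (nat \<Rightarrow> int) \<Rightarrow> bool" where
  "adj n m v u \<longleftrightarrow> v \<in> Zv n m \<and> u \<in> Zv n m \<and>
     (\<exists>i\<le>m. left_shift n m i v u \<or> right_shift n m i v u)"

definition is_path :: "nat \<Rightarrow> nat \<Rightarrow> (nat \<Rightarrow> int) \<Rightarrow> (nat \<Rightarrow> int) \<Rightarrow> (nat \<Rightarrow> int) list \<Rightarrow> bool" where
  "is_path n m v u xs \<longleftrightarrow> xs \<noteq> [] \<and> hd xs = v \<and> last xs = u \<and> set xs \<subseteq> Zv n m
     \<and> (\<forall>k < length xs - 1. adj n m (xs ! k) (xs ! Suc k))"

definition gdist :: "nat \<Rightarrow> nat \<Rightarrow> (nat \<Rightarrow> int) \<Rightarrow> (nat \<Rightarrow> int) \<Rightarrow> enat" where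
  "gdist n m v u = (INF xs \<in> {xs. is_path n m v u xs}. enat (length xs - 1))"

definition is_wall :: "nat \<Rightarrow> nat \<Rightarrow> int \<Rightarrow> (nat \<Rightarrow> int) list \<Rightarrow> bool" where
  "is_wall n m p xs \<longleftrightarrow>
     (if p = -1 then (\<forall>k < length xs - 1. \<not> left_shift n m 0 (xs ! k) (xs ! Suc k))
      else if p = int m + 1 then (\<forall>k < length xs - 1. \<not> right_shift n m m (xs ! k) (xs ! Suc k))
      else if 0 \<le> p \<and> p \<le> int m then
        (\<forall>k < length xs - 1. \<not> left_shift n m (nat p) (xs ! k) (xs ! Suc k)
                              \<and> \<not> right_shift n m (nat p) (xs ! k) (xs ! Suc k))
      else False)"

(* ps_p(v): minimal length of a path from v to 0 having p as a wall (infinity if none) *)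
definition ps :: "nat \<Rightarrow> nat \<Rightarrow> int \<Rightarrow> (nat \<Rightarrow> int) \<Rightarrow> ereal" where
  "ps n m p v = (INF xs \<in> {xs. is_path n m v zerov xs \<and> is_wall n m p xs}.
                   ereal (real (length xs - 1)))"

definition Piv :: "nat \<Rightarrow> nat \<Rightarrow> (nat \<Rightarrow> int) \<Rightarrow> int set" where
  "Piv n m v = {p. -1 \<le> p \<and> p \<le> int m + 1 \<and> int n dvd (\<Sum>i\<in>{0..p}. v (nat i))}"

end

theory Submission
  imports Defs
begin

(* Encode v by its heights S p = v 0 + ... + v p for p \<le> m. A left (right) shift at i
   raises (lowers) S i by one, and Piv v = {-1, m+1} says exactly that all heights lie in
   [1, n-1]; the vertex 0 corresponds to constant height n or constant height 0.
   Repeatedly raising a lowest height keeps consecutive heights within distance one and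
   reaches height n in \<Sum>p. (n - S p) steps, none of them a right shift at m; lowering a
   highest height reaches 0 in \<Sum>p. S p steps, none a left shift at 0. Conversely the moment
   \<Sum>i. i v i drops by at most one along any step that is not a right shift at m (a left shift
   at m can only wrap v (m+1) upwards), and symmetrically for \<Sum>i. (m+1-i) v i. These two
   values are the lengths found above and add up to n (m+1), so one of them is at most
   half of it. *)

lemma successively_conv_nth:
  "successively P xs \<longleftrightarrow> (\<forall>k < length xs - 1. P (xs ! k) (xs ! Suc k))"
proof (induction P xs rule: successively.induct)
  case (3 P x y xs)
  then show ?case by (auto simp: less_Suc_eq_0_disj)
qed simp_all

lemma successively_conj_iff:
  "successively (\<lambda>x y. P x y \<and> Q x y) xs \<longleftrightarrow> successively P xs \<and> successively Q xs"
  by (induction P xs rule: successively.induct) auto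

lemma successively_descent_bound:
  fixes f :: "'a \<Rightarrow> int"
  assumes "successively (\<lambda>x y. f x \<le> f y + 1) xs" and "xs \<noteq> []"
  shows "f (hd xs) \<le> f (last xs) + int (length xs - 1)"
  using assms by (induction "\<lambda>x y. f x \<le> f y + 1" xs rule: successively.induct) auto

lemma sum_fun_upd:
  fixes g :: "'b \<Rightarrow> 'c::comm_monoid_add"
  assumes "finite A" and "i \<in> A"
  shows "(\<Sum>p\<in>A. g ((s(i := x)) p)) + g (s i) = (\<Sum>p\<in>A. g (s p)) + g x"
proof -
  have rest: "(\<Sum>p\<in>A - {i}. g ((s(i := x)) p)) = (\<Sum>p\<in>A - {i}. g (s p))"
    by (rule sum.cong) auto
  show ?thesis
    using assms by (simp add: sum.remove[of A i] rest ac_simps)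
qed

lemma neg_mod_eq_if_dvd_add:
  fixes a b c :: int
  assumes "c dvd a + b" and "0 \<le> b" and "b < c"
  shows "(- a) mod c = b"
proof -
  have "c dvd - a - b"
    using assms(1) dvd_minus_iff[of c "a + b"] by (simp add: algebra_simps)
  then have "(- a) mod c = b mod c"
    by (rule mod_eq_dvd_iff[THEN iffD2])
  then show ?thesis
    using assms(2,3) by simp
qed

lemma sum_partial_sums:
  fixes f :: "nat \<Rightarrow> int"
  shows "(\<Sum>p\<le>k. \<Sum>i\<le>p. f i) = (\<Sum>i\<le>k. (int k + 1 - int i) * f i)"
proof (induction k)
  case (Suc k)
  have "(\<Sum>i\<le>k. (int (Suc k) + 1 - int i) * f i) = (\<Sum>i\<le>k. (int k + 1 - int i) * f i) + (\<Sum>i\<le>k. f i)"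
    unfolding sum.distrib[symmetric] by (rule sum.cong) (auto simp: algebra_simps)
  then show ?case using Suc by simp
qed simp

lemma is_path_iff:
  "is_path n m v u xs \<longleftrightarrow>
     xs \<noteq> [] \<and> hd xs = v \<and> last xs = u \<and> set xs \<subseteq> Zv n m \<and> successively (adj n m) xs"
  by (simp add: is_path_def successively_conv_nth)

lemma is_path_Cons: "is_path n m w u xs \<Longrightarrow> adj n m v w \<Longrightarrow> is_path n m v u (v # xs)"
  by (auto simp: is_path_iff successively_Cons adj_def)

lemma is_wall_last_iff:
  "is_wall n m (int m + 1) xs \<longleftrightarrow> successively (\<lambda>x y. \<not> right_shift n m m x y) xs"
  by (simp add: is_wall_def successively_conv_nth)

lemma is_wall_first_iff:
  "is_wall n m (-1) xs \<longleftrightarrow> successively (\<lambda>x y. \<not> left_shift n m 0 x y) xs"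
  by (simp add: is_wall_def successively_conv_nth)

lemma zerov_in_Zv: "n > 0 \<Longrightarrow> zerov \<in> Zv n m"
  by (simp add: Zv_def zerov_def)

lemma gdist_le_path_length: "is_path n m v u xs \<Longrightarrow> gdist n m v u \<le> enat (length xs - 1)"
  unfolding gdist_def by (rule INF_lower) simp

lemma ps_eqI:
  assumes "is_path n m v zerov xs" and "is_wall n m p xs" and "int (length xs - 1) = d"
    and "\<And>ys. is_path n m v zerov ys \<Longrightarrow> is_wall n m p ys \<Longrightarrow> d \<le> int (length ys - 1)"
  shows "ps n m p v = ereal (of_int d)"
  unfolding ps_def
proof (rule antisym)
  show "(INF ys\<in>{ys. is_path n m v zerov ys \<and> is_wall n m p ys}. ereal (real (length ys - 1)))
      \<le> ereal (of_int d)"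
    by (rule INF_lower2[of xs]) (use assms in auto)
  show "ereal (of_int d)
      \<le> (INF ys\<in>{ys. is_path n m v zerov ys \<and> is_wall n m p ys}. ereal (real (length ys - 1)))"
    by (rule INF_greatest) (use assms(4) in force)
qed

lemma path_to_zero_by_descent:
  fixes f :: "'h \<Rightarrow> nat \<Rightarrow> int" and \<Phi> :: "'h \<Rightarrow> nat"
  assumes "n > 0"
    and zero: "\<And>s. P s \<Longrightarrow> \<Phi> s = 0 \<Longrightarrow> f s = zerov"
    and step: "\<And>s. P s \<Longrightarrow> 0 < \<Phi> s \<Longrightarrow>
                 \<exists>s'. P s' \<and> \<Phi> s' = \<Phi> s - 1 \<and> adj n m (f s) (f s') \<and> Q (f s) (f s')"
    and "P s"
  shows "\<exists>xs. is_path n m (f s) zerov xs \<and> successively Q xs \<and> length xs = Suc (\<Phi> s)"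
  using \<open>P s\<close>
proof (induction "\<Phi> s" arbitrary: s)
  case 0
  then show ?case
    using zero zerov_in_Zv[OF \<open>n > 0\<close>] by (intro exI[of _ "[zerov]"]) (simp add: is_path_iff)
next
  case (Suc d)
  obtain s' where s': "P s'" "\<Phi> s' = d" "adj n m (f s) (f s')" "Q (f s) (f s')"
    using step[OF Suc.prems] Suc.hyps(2) by force
  obtain xs where xs: "is_path n m (f s') zerov xs" "successively Q xs" "length xs = Suc d"
    using Suc.hyps(1)[OF s'(2)[symmetric] s'(1)] s'(2) by blast
  show ?case
    using xs s' Suc.hyps(2) is_path_Cons[OF xs(1) s'(3)]
    by (intro exI[of _ "f s # xs"]) (auto simp: successively_Cons is_path_iff)
qed

definition height_vertex :: "nat \<Rightarrow> nat \<Rightarrow> (nat \<Rightarrow> int) \<Rightarrow> nat \<Rightarrow> int" where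
  "height_vertex n m s j =
     (if j = 0 then s 0 mod int n else if j \<le> m then s j - s (j - 1)
      else if j = m + 1 then (- s m) mod int n else 0)"

definition height_profile :: "nat \<Rightarrow> int \<Rightarrow> int \<Rightarrow> (nat \<Rightarrow> int) \<Rightarrow> bool" where
  "height_profile m a b s \<longleftrightarrow>
     (\<forall>p\<le>m. a \<le> s p \<and> s p \<le> b) \<and> (\<forall>p\<in>{1..m}. \<bar>s p - s (p - 1)\<bar> \<le> 1)"

lemma sum_height_vertex:
  "p \<le> m \<Longrightarrow> (\<Sum>j\<le>p. height_vertex n m s j) = s 0 mod int n + s p - s 0"
  by (induction p) (simp_all add: height_vertex_def)

lemma height_vertex_in_Zv:
  assumes "n > 0" and steps: "\<forall>p\<in>{1..m}. \<bar>s p - s (p - 1)\<bar> \<le> 1"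
  shows "height_vertex n m s \<in> Zv n m"
proof -
  have "(\<Sum>j\<le>m+1. height_vertex n m s j) = (s 0 mod int n - s 0) + (s m + (- s m) mod int n)"
    using sum_height_vertex[of m m n s] by (simp add: height_vertex_def)
  moreover have "int n dvd (s 0 mod int n - s 0)" "int n dvd (s m + (- s m) mod int n)"
    by (simp_all add: dvd_eq_mod_eq_0 mod_diff_left_eq mod_add_right_eq)
  ultimately have "int n dvd (\<Sum>j\<le>m+1. height_vertex n m s j)"
    by simp
  moreover have "height_vertex n m s i \<in> {-1, 0, 1}" if "i \<in> {1..m}" for i
  proof -
    have "\<bar>s i - s (i - 1)\<bar> \<le> 1"
      using steps that by blast
    then show ?thesis
      using that by (auto simp: height_vertex_def)
  qed
  ultimately show ?thesis
    using \<open>n > 0\<close> by (auto simp: Zv_def height_vertex_def)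
qed

lemma height_vertex_const:
  assumes "\<forall>p\<le>m. s p = c" and "int n dvd c"
  shows "height_vertex n m s = zerov"
proof
  fix j
  show "height_vertex n m s j = zerov j"
    using assms by (auto simp: height_vertex_def zerov_def)
qed

lemma height_vertex_partial_sums:
  assumes "v \<in> Zv n m"
  shows "height_vertex n m (\<lambda>p. \<Sum>i\<le>p. v i) = v"
proof
  fix j
  have ends: "v 0 \<in> {0..<int n}" "v (m+1) \<in> {0..<int n}" and out: "\<forall>i>m+1. v i = 0"
    and total: "int n dvd (\<Sum>i\<le>m. v i) + v (m+1)"
    using assms by (auto simp: Zv_def)
  have "(- (\<Sum>i\<le>m. v i)) mod int n = v (m+1)"
    using neg_mod_eq_if_dvd_add[OF total] ends by simp
  moreover have "(\<Sum>i\<le>j. v i) - (\<Sum>i\<le>j - 1. v i) = v j" if "j > 0"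
    using that by (cases j) simp_all
  ultimately show "height_vertex n m (\<lambda>p. \<Sum>i\<le>p. v i) j = v j"
    using ends out by (auto simp: height_vertex_def not_le)
qed

lemma left_shift_height_vertex:
  assumes "i \<le> m"
  shows "left_shift n m i (height_vertex n m s) (height_vertex n m (s(i := s i + 1)))"
  using assms
  by (auto simp: left_shift_def height_vertex_def cadd_def mod_add_left_eq mod_diff_left_eq
      diff_diff_eq)

lemma right_shift_height_vertex:
  assumes "i \<le> m"
  shows "right_shift n m i (height_vertex n m s) (height_vertex n m (s(i := s i - 1)))"
  using assms
  by (auto simp: right_shift_def height_vertex_def cadd_def mod_add_left_eq mod_diff_left_eq
      mod_add_right_eq algebra_simps)

lemma succ_mod_neq: "0 \<le> x \<Longrightarrow> x < int n \<Longrightarrow> n > 1 \<Longrightarrow> (x + 1) mod int n \<noteq> x"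
  by (cases "x + 1 = int n") simp_all

lemma left_shift_not_right_shift_last:
  assumes "left_shift n m i u w" and "u \<in> Zv n m" and "n > 1" and "m \<ge> 1"
  shows "\<not> right_shift n m m u w"
proof
  assume r: "right_shift n m m u w"
  have "i \<le> m" and "w m = u m - 1" and "w (m+1) = (u (m+1) + 1) mod int n"
    using assms(1,4) r by (simp_all add: left_shift_def right_shift_def cadd_def)
  moreover have "0 \<le> u (m+1)" "u (m+1) < int n"
    using \<open>u \<in> Zv n m\<close> by (simp_all add: Zv_def)
  ultimately show False
    using assms(1,3,4) succ_mod_neq[of "u (m+1)" n]
    by (cases "i = m") (auto simp: left_shift_def cadd_def)
qed

lemma right_shift_not_left_shift_first:
  assumes "right_shift n m i u w" and "u \<in> Zv n m" and "n > 1" and "m \<ge> 1"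
  shows "\<not> left_shift n m 0 u w"
proof
  assume l: "left_shift n m 0 u w"
  have "w 1 = u 1 - 1" and "w 0 = (u 0 + 1) mod int n"
    using assms(4) l by (simp_all add: left_shift_def cadd_def)
  moreover have "0 \<le> u 0" "u 0 < int n"
    using \<open>u \<in> Zv n m\<close> by (simp_all add: Zv_def)
  ultimately show False
    using assms(1,3,4) succ_mod_neq[of "u 0" n]
    by (cases "i = 0") (auto simp: right_shift_def cadd_def)
qed

lemma raise_min_height:
  assumes "n > 1" and "m \<ge> 1" and prof: "height_profile m 1 (int n) s"
    and pos: "0 < (\<Sum>p\<le>m. nat (int n - s p))"
  shows "\<exists>s'. height_profile m 1 (int n) s'
    \<and> (\<Sum>p\<le>m. nat (int n - s' p)) = (\<Sum>p\<le>m. nat (int n - s p)) - 1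
    \<and> adj n m (height_vertex n m s) (height_vertex n m s')
    \<and> \<not> right_shift n m m (height_vertex n m s) (height_vertex n m s')"
proof -
  obtain i where i: "i \<le> m" and min: "\<forall>p\<le>m. s i \<le> s p"
    using ex_is_arg_min_if_finite[of "{..m}" s] by (auto simp: is_arg_min_linorder)
  have "s i < int n"
  proof (rule ccontr)
    assume "\<not> s i < int n"
    then have "\<forall>p\<le>m. s p = int n"
      using min prof by (force simp: height_profile_def)
    then show False
      using pos by simp
  qed
  define s' where "s' = s(i := s i + 1)"
  have "\<bar>s' p - s' (p - 1)\<bar> \<le> 1" if "p \<in> {1..m}" for p
  proof -
    have "\<bar>s p - s (p - 1)\<bar> \<le> 1" "s i \<le> s p" "s i \<le> s (p - 1)"
      using prof min that by (auto simp: height_profile_def)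
    then show ?thesis
      by (auto simp: s'_def)
  qed
  then have "height_profile m 1 (int n) s'"
    using prof \<open>s i < int n\<close> by (auto simp: height_profile_def s'_def)
  moreover have "(\<Sum>p\<le>m. nat (int n - s' p)) = (\<Sum>p\<le>m. nat (int n - s p)) - 1"
    using sum_fun_upd[of "{..m}" i "\<lambda>x. nat (int n - x)" s "s i + 1"] i \<open>s i < int n\<close>
    by (simp add: s'_def)
  moreover have "left_shift n m i (height_vertex n m s) (height_vertex n m s')"
    unfolding s'_def using i by (rule left_shift_height_vertex)
  moreover have "height_vertex n m s \<in> Zv n m" "height_vertex n m s' \<in> Zv n m"
    using \<open>n > 1\<close> prof calculation(1) by (simp_all add: height_vertex_in_Zv height_profile_def)
  ultimately show ?thesis
    using i left_shift_not_right_shift_last \<open>n > 1\<close> \<open>m \<ge> 1\<close> unfolding adj_def by blast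
qed

lemma lower_max_height:
  assumes "n > 1" and "m \<ge> 1" and prof: "height_profile m 0 (int n - 1) s"
    and pos: "0 < (\<Sum>p\<le>m. nat (s p))"
  shows "\<exists>s'. height_profile m 0 (int n - 1) s'
    \<and> (\<Sum>p\<le>m. nat (s' p)) = (\<Sum>p\<le>m. nat (s p)) - 1
    \<and> adj n m (height_vertex n m s) (height_vertex n m s')
    \<and> \<not> left_shift n m 0 (height_vertex n m s) (height_vertex n m s')"
proof -
  obtain i where i: "i \<le> m" and max: "\<forall>p\<le>m. s p \<le> s i"
    using ex_is_arg_min_if_finite[of "{..m}" "\<lambda>p. - s p"] by (auto simp: is_arg_min_linorder)
  have "0 < s i"
  proof (rule ccontr)
    assume "\<not> 0 < s i"
    then have "\<forall>p\<le>m. s p = 0"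
      using max prof by (force simp: height_profile_def)
    then show False
      using pos by simp
  qed
  define s' where "s' = s(i := s i - 1)"
  have "\<bar>s' p - s' (p - 1)\<bar> \<le> 1" if "p \<in> {1..m}" for p
  proof -
    have "\<bar>s p - s (p - 1)\<bar> \<le> 1" "s p \<le> s i" "s (p - 1) \<le> s i"
      using prof max that by (auto simp: height_profile_def)
    then show ?thesis
      by (auto simp: s'_def)
  qed
  then have "height_profile m 0 (int n - 1) s'"
    using prof \<open>0 < s i\<close> by (auto simp: height_profile_def s'_def)
  moreover have "(\<Sum>p\<le>m. nat (s' p)) = (\<Sum>p\<le>m. nat (s p)) - 1"
    using sum_fun_upd[of "{..m}" i "\<lambda>x. nat x" s "s i - 1"] i \<open>0 < s i\<close>
    by (simp add: s'_def)
  moreover have "right_shift n m i (height_vertex n m s) (height_vertex n m s')"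
    unfolding s'_def using i by (rule right_shift_height_vertex)
  moreover have "height_vertex n m s \<in> Zv n m" "height_vertex n m s' \<in> Zv n m"
    using \<open>n > 1\<close> prof calculation(1) by (simp_all add: height_vertex_in_Zv height_profile_def)
  ultimately show ?thesis
    using i right_shift_not_left_shift_first \<open>n > 1\<close> \<open>m \<ge> 1\<close> unfolding adj_def by blast
qed

lemma wall_path_last_from_heights:
  assumes "n > 1" and "m \<ge> 1" and "height_profile m 1 (int n) s"
  shows "\<exists>xs. is_path n m (height_vertex n m s) zerov xs \<and> is_wall n m (int m + 1) xs
    \<and> length xs = Suc (\<Sum>p\<le>m. nat (int n - s p))"
proof -
  have "height_vertex n m s = zerov"
    if "height_profile m 1 (int n) s" "(\<Sum>p\<le>m. nat (int n - s p)) = 0" for s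
    using that by (intro height_vertex_const[where c = "int n"]) (force simp: height_profile_def)+
  then show ?thesis
    using path_to_zero_by_descent[where P = "height_profile m 1 (int n)"
        and \<Phi> = "\<lambda>s. \<Sum>p\<le>m. nat (int n - s p)" and f = "height_vertex n m"
        and Q = "\<lambda>x y. \<not> right_shift n m m x y"]
      raise_min_height assms
    by (simp add: is_wall_last_iff)
qed

lemma wall_path_first_from_heights:
  assumes "n > 1" and "m \<ge> 1" and "height_profile m 0 (int n - 1) s"
  shows "\<exists>xs. is_path n m (height_vertex n m s) zerov xs \<and> is_wall n m (-1) xs
    \<and> length xs = Suc (\<Sum>p\<le>m. nat (s p))"
proof -
  have "height_vertex n m s = zerov"
    if "height_profile m 0 (int n - 1) s" "(\<Sum>p\<le>m. nat (s p)) = 0" for s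
    using that by (intro height_vertex_const[where c = 0]) (force simp: height_profile_def)+
  then show ?thesis
    using path_to_zero_by_descent[where P = "height_profile m 0 (int n - 1)"
        and \<Phi> = "\<lambda>s. \<Sum>p\<le>m. nat (s p)" and f = "height_vertex n m"
        and Q = "\<lambda>x y. \<not> left_shift n m 0 x y"]
      lower_max_height assms
    by (simp add: is_wall_first_iff)
qed

lemma sum_weighted_shift:
  fixes c :: "nat \<Rightarrow> int"
  assumes "i \<le> m" and "\<forall>j. j \<noteq> i \<and> j \<noteq> i + 1 \<longrightarrow> w j = u j"
  shows "(\<Sum>j\<le>m+1. c j * w j)
    = (\<Sum>j\<le>m+1. c j * u j) + c i * (w i - u i) + c (i+1) * (w (i+1) - u (i+1))"
proof -
  have "(\<Sum>j\<le>m+1. c j * w j) - (\<Sum>j\<le>m+1. c j * u j) = (\<Sum>j\<le>m+1. c j * (w j - u j))"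
    by (simp add: sum_subtractf right_diff_distrib)
  also have "\<dots> = (\<Sum>j\<in>{i, i+1}. c j * (w j - u j))"
    by (rule sum.mono_neutral_left[symmetric]) (use assms in auto)
  finally show ?thesis
    by simp
qed

lemma pred_mod_ge:
  assumes "0 \<le> x" and "x < int n"
  shows "x - 1 \<le> (x - 1) mod int n"
proof (cases "x = 0")
  case True
  have "0 \<le> (x - 1) mod int n"
    using assms by simp
  then show ?thesis
    using True by simp
qed (use assms in simp)

lemma moment_step:
  assumes "m \<ge> 1" and "adj n m u w" and "\<not> right_shift n m m u w"
  shows "(\<Sum>j\<le>m+1. int j * u j) \<le> (\<Sum>j\<le>m+1. int j * w j) + 1"
proof -
  obtain i where i: "i \<le> m" and sh: "left_shift n m i u w \<or> right_shift n m i u w"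
    using assms(2) by (auto simp: adj_def)
  have "0 \<le> u (m+1)" "u (m+1) < int n"
    using assms(2) by (simp_all add: adj_def Zv_def)
  then have last: "u (m+1) - 1 \<le> (u (m+1) - 1) mod int n"
    by (rule pred_mod_ge)
  have "-1 \<le> int i * (w i - u i) + int (i+1) * (w (i+1) - u (i+1))"
  proof (cases "left_shift n m i u w")
    case True
    then have "-1 \<le> w (i+1) - u (i+1)" and "i \<noteq> 0 \<Longrightarrow> w i = u i + 1"
      using i last by (auto simp: left_shift_def cadd_def)
    then have "- int (i+1) \<le> int (i+1) * (w (i+1) - u (i+1))"
      using mult_left_mono[of "-1" "w (i+1) - u (i+1)" "int (i+1)"] by simp
    then show ?thesis
      using \<open>i \<noteq> 0 \<Longrightarrow> w i = u i + 1\<close> by (cases "i = 0") simp_all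
  next
    case False
    then have "right_shift n m i u w" and "i \<noteq> m"
      using sh assms(3) by auto
    then have "w (i+1) = u (i+1) + 1" and "i \<noteq> 0 \<Longrightarrow> w i = u i - 1"
      using i by (auto simp: right_shift_def cadd_def)
    then show ?thesis
      by (cases "i = 0") simp_all
  qed
  moreover have "\<forall>j. j \<noteq> i \<and> j \<noteq> i + 1 \<longrightarrow> w j = u j"
    using sh by (auto simp: left_shift_def right_shift_def)
  ultimately show ?thesis
    using sum_weighted_shift[OF i, of w u int] by simp
qed

lemma comoment_step:
  assumes "m \<ge> 1" and "adj n m u w" and "\<not> left_shift n m 0 u w"
  shows "(\<Sum>j\<le>m+1. (int m + 1 - int j) * u j) \<le> (\<Sum>j\<le>m+1. (int m + 1 - int j) * w j) + 1"
proof -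
  obtain i where i: "i \<le> m" and sh: "left_shift n m i u w \<or> right_shift n m i u w"
    using assms(2) by (auto simp: adj_def)
  have "0 \<le> u 0" "u 0 < int n"
    using assms(2) by (simp_all add: adj_def Zv_def)
  then have first: "u 0 - 1 \<le> (u 0 - 1) mod int n"
    by (rule pred_mod_ge)
  have "-1 \<le> (int m + 1 - int i) * (w i - u i) + (int m - int i) * (w (i+1) - u (i+1))"
  proof (cases "left_shift n m i u w")
    case True
    then have "i \<noteq> 0"
      using assms(3) by (cases "i = 0") auto
    then have "w i = u i + 1" and "i \<noteq> m \<Longrightarrow> w (i+1) = u (i+1) - 1"
      using True i by (auto simp: left_shift_def cadd_def)
    then show ?thesis
      by (cases "i = m") simp_all
  next
    case False
    then have R: "right_shift n m i u w"
      using sh by auto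
    then have "-1 \<le> w i - u i" and "i \<noteq> m \<Longrightarrow> w (i+1) = u (i+1) + 1"
      using i first by (auto simp: right_shift_def cadd_def)
    then have "- (int m + 1 - int i) \<le> (int m + 1 - int i) * (w i - u i)"
      using mult_left_mono[of "-1" "w i - u i" "int m + 1 - int i"] i by simp
    then show ?thesis
      using \<open>i \<noteq> m \<Longrightarrow> w (i+1) = u (i+1) + 1\<close> by (cases "i = m") simp_all
  qed
  moreover have "\<forall>j. j \<noteq> i \<and> j \<noteq> i + 1 \<longrightarrow> w j = u j"
    using sh by (auto simp: left_shift_def right_shift_def)
  ultimately show ?thesis
    using sum_weighted_shift[OF i, of w u "\<lambda>j. int m + 1 - int j"] by simp
qed

lemma moment_le_wall_path_length:
  assumes "m \<ge> 1" and path: "is_path n m v zerov xs" and "is_wall n m (int m + 1) xs"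
  shows "(\<Sum>j\<le>m+1. int j * v j) \<le> int (length xs - 1)"
proof -
  let ?f = "\<lambda>u. \<Sum>j\<le>m+1. int j * u j"
  have "successively (\<lambda>u w. adj n m u w \<and> \<not> right_shift n m m u w) xs"
    using assms(2,3) by (simp add: is_path_iff is_wall_last_iff successively_conj_iff)
  then have "successively (\<lambda>u w. ?f u \<le> ?f w + 1) xs"
    by (rule successively_mono) (use moment_step \<open>m \<ge> 1\<close> in blast)
  then have "?f (hd xs) \<le> ?f (last xs) + int (length xs - 1)"
    using path by (intro successively_descent_bound) (simp_all add: is_path_iff)
  then show ?thesis
    using path by (simp add: is_path_iff zerov_def)
qed

lemma comoment_le_wall_path_length:
  assumes "m \<ge> 1" and path: "is_path n m v zerov xs" and "is_wall n m (-1) xs"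
  shows "(\<Sum>j\<le>m+1. (int m + 1 - int j) * v j) \<le> int (length xs - 1)"
proof -
  let ?f = "\<lambda>u. \<Sum>j\<le>m+1. (int m + 1 - int j) * u j"
  have "successively (\<lambda>u w. adj n m u w \<and> \<not> left_shift n m 0 u w) xs"
    using assms(2,3) by (simp add: is_path_iff is_wall_first_iff successively_conj_iff)
  then have "successively (\<lambda>u w. ?f u \<le> ?f w + 1) xs"
    by (rule successively_mono) (use comoment_step \<open>m \<ge> 1\<close> in blast)
  then have "?f (hd xs) \<le> ?f (last xs) + int (length xs - 1)"
    using path by (intro successively_descent_bound) (simp_all add: is_path_iff)
  then show ?thesis
    using path by (simp add: is_path_iff zerov_def)
qed

lemma comoment_eq_sum_partial_sums:
  "(\<Sum>j\<le>m+1. (int m + 1 - int j) * v j) = (\<Sum>p\<le>m. \<Sum>i\<le>p. v i)"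
  by (simp add: sum_partial_sums)

lemma moment_add_comoment:
  "(\<Sum>j\<le>m+1. int j * v j) + (\<Sum>j\<le>m+1. (int m + 1 - int j) * v j)
     = (int m + 1) * (\<Sum>i\<le>m+1. v i)"
  unfolding sum.distrib[symmetric] sum_distrib_left by (rule sum.cong) (simp_all add: algebra_simps)

lemma moment_eq_sum_partial_sums:
  assumes "(\<Sum>i\<le>m+1. v i) = int n"
  shows "(\<Sum>j\<le>m+1. int j * v j) = (\<Sum>p\<le>m. int n - (\<Sum>i\<le>p. v i))"
proof -
  have "(\<Sum>j\<le>m+1. int j * v j) = (int m + 1) * int n - (\<Sum>p\<le>m. \<Sum>i\<le>p. v i)"
    using moment_add_comoment[where m = m and v = v] assms by (simp only: comoment_eq_sum_partial_sums)
  then show ?thesis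
    by (simp add: sum_subtractf)
qed

lemma sum_atLeastAtMost_int_nat: "(\<Sum>i\<in>{0..int p}. f (nat i)) = (\<Sum>i\<le>p. f i)"
proof -
  have "{0..int p} = int ` {..p}"
    by (auto simp: image_iff intro!: bexI[of _ "nat x" for x])
  then show ?thesis
    by (simp add: sum.reindex)
qed

lemma partial_sums_range:
  assumes "v \<in> Zv n m" and "Piv n m v = {-1, int m + 1}" and "p \<le> m"
  shows "1 \<le> (\<Sum>i\<le>p. v i) \<and> (\<Sum>i\<le>p. v i) \<le> int n - 1"
  using \<open>p \<le> m\<close>
proof (induction p)
  have not_dvd: "\<not> int n dvd (\<Sum>i\<le>q. v i)" if "q \<le> m" for q
  proof
    assume "int n dvd (\<Sum>i\<le>q. v i)"
    then have "int q \<in> Piv n m v"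
      using that by (simp add: Piv_def sum_atLeastAtMost_int_nat)
    then show False
      using assms(2) that by auto
  qed
  {
    case 0
    have "v 0 \<noteq> 0"
      using not_dvd[of 0] by auto
    then show ?case
      using assms(1) by (auto simp: Zv_def)
  next
    case (Suc p)
    have "v (Suc p) \<in> {-1, 0, 1}"
      using assms(1) Suc.prems by (auto simp: Zv_def)
    moreover have "(\<Sum>i\<le>Suc p. v i) \<noteq> 0" "(\<Sum>i\<le>Suc p. v i) \<noteq> int n"
      using not_dvd[OF Suc.prems] by auto
    ultimately show ?case
      using Suc by auto
  }
qed

lemma sum_eq_if_Piv:
  assumes "v \<in> Zv n m" and "Piv n m v = {-1, int m + 1}"
  shows "(\<Sum>i\<le>m+1. v i) = int n"
proof -
  have "1 \<le> (\<Sum>i\<le>m. v i)" "(\<Sum>i\<le>m. v i) \<le> int n - 1"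
    using partial_sums_range[OF assms] by simp_all
  moreover have "0 \<le> v (m+1)" "v (m+1) < int n"
    using assms(1) by (simp_all add: Zv_def)
  ultimately have "0 < (\<Sum>i\<le>m+1. v i)" "(\<Sum>i\<le>m+1. v i) < int n * 2"
    by simp_all
  moreover obtain k where k: "(\<Sum>i\<le>m+1. v i) = int n * k"
    using assms(1) by (auto simp: Zv_def elim: dvdE)
  ultimately have "0 < k" "k < 2"
    by (simp_all add: zero_less_mult_iff)
  then have "k = 1"
    by simp
  then show ?thesis
    using k by simp
qed

lemma height_profile_partial_sums:
  assumes "v \<in> Zv n m" and "\<forall>p\<le>m. a \<le> (\<Sum>i\<le>p. v i) \<and> (\<Sum>i\<le>p. v i) \<le> b"
  shows "height_profile m a b (\<lambda>p. \<Sum>i\<le>p. v i)"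
proof -
  have "\<bar>(\<Sum>i\<le>p. v i) - (\<Sum>i\<le>p - 1. v i)\<bar> \<le> 1" if "p \<in> {1..m}" for p
  proof -
    have "(\<Sum>i\<le>p. v i) - (\<Sum>i\<le>p - 1. v i) = v p"
      using that by (cases p) simp_all
    moreover have "v p \<in> {-1, 0, 1}"
      using assms(1) that by (simp add: Zv_def)
    ultimately show ?thesis
      by auto
  qed
  then show ?thesis
    using assms(2) by (simp add: height_profile_def)
qed

lemma wall_path_last_of_moment_length:
  assumes "n > 1" and "m \<ge> 1" and "v \<in> Zv n m" and "Piv n m v = {-1, int m + 1}"
  shows "\<exists>xs. is_path n m v zerov xs \<and> is_wall n m (int m + 1) xs
    \<and> int (length xs - 1) = (\<Sum>j\<le>m+1. int j * v j)"
proof -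
  have range: "\<forall>p\<le>m. 1 \<le> (\<Sum>i\<le>p. v i) \<and> (\<Sum>i\<le>p. v i) \<le> int n - 1"
    using partial_sums_range[OF assms(3,4)] by blast
  then have "height_profile m 1 (int n) (\<lambda>p. \<Sum>i\<le>p. v i)"
    using height_profile_partial_sums[OF assms(3), of 1 "int n"] by force
  then obtain xs where xs: "is_path n m v zerov xs" "is_wall n m (int m + 1) xs"
    "length xs = Suc (\<Sum>p\<le>m. nat (int n - (\<Sum>i\<le>p. v i)))"
    using wall_path_last_from_heights[OF assms(1,2)] height_vertex_partial_sums[OF assms(3)]
    by metis
  have "int (length xs - 1) = (\<Sum>p\<le>m. int n - (\<Sum>i\<le>p. v i))"
    using xs(3) range by (auto intro!: sum.cong)
  also have "\<dots> = (\<Sum>j\<le>m+1. int j * v j)"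
    using moment_eq_sum_partial_sums[OF sum_eq_if_Piv[OF assms(3,4)]] by simp
  finally show ?thesis
    using xs by blast
qed

lemma wall_path_first_of_comoment_length:
  assumes "n > 1" and "m \<ge> 1" and "v \<in> Zv n m" and "Piv n m v = {-1, int m + 1}"
  shows "\<exists>xs. is_path n m v zerov xs \<and> is_wall n m (-1) xs
    \<and> int (length xs - 1) = (\<Sum>j\<le>m+1. (int m + 1 - int j) * v j)"
proof -
  have range: "\<forall>p\<le>m. 1 \<le> (\<Sum>i\<le>p. v i) \<and> (\<Sum>i\<le>p. v i) \<le> int n - 1"
    using partial_sums_range[OF assms(3,4)] by blast
  then have "height_profile m 0 (int n - 1) (\<lambda>p. \<Sum>i\<le>p. v i)"
    using height_profile_partial_sums[OF assms(3), of 0 "int n - 1"] by force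
  then obtain xs where xs: "is_path n m v zerov xs" "is_wall n m (-1) xs"
    "length xs = Suc (\<Sum>p\<le>m. nat (\<Sum>i\<le>p. v i))"
    using wall_path_first_from_heights[OF assms(1,2)] height_vertex_partial_sums[OF assms(3)]
    by metis
  have "int (length xs - 1) = (\<Sum>p\<le>m. \<Sum>i\<le>p. v i)"
    using xs(3) range by (auto intro!: sum.cong)
  also have "\<dots> = (\<Sum>j\<le>m+1. (int m + 1 - int j) * v j)"
    by (simp only: comoment_eq_sum_partial_sums)
  finally show ?thesis
    using xs by blast
qed

theorem lemma5p15:
  fixes n m :: nat and v :: "nat \<Rightarrow> int"
  assumes "n > 1" and "m \<ge> 1" and "v \<in> Zv n m"
    and "Piv n m v = {-1, int m + 1}"
  shows "ps n m (int m + 1) v = ereal (of_int (\<Sum>i\<le>m+1. int i * v i))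
    \<and> ps n m (-1) v = ereal (of_int (\<Sum>i\<le>m+1. (int m + 1 - int i) * v i))
    \<and> gdist n m v zerov \<le> enat (n * (m + 1) div 2)"
proof -
  obtain xs where xs: "is_path n m v zerov xs" "is_wall n m (int m + 1) xs"
    and len_xs: "int (length xs - 1) = (\<Sum>i\<le>m+1. int i * v i)"
    using wall_path_last_of_moment_length[OF assms] by blast
  obtain ys where ys: "is_path n m v zerov ys" "is_wall n m (-1) ys"
    and len_ys: "int (length ys - 1) = (\<Sum>i\<le>m+1. (int m + 1 - int i) * v i)"
    using wall_path_first_of_comoment_length[OF assms] by blast
  have "int (length xs - 1) + int (length ys - 1) = (int m + 1) * (\<Sum>i\<le>m+1. v i)"
    unfolding len_xs len_ys by (rule moment_add_comoment)
  then have "int (length xs - 1 + (length ys - 1)) = int (n * (m + 1))"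
    unfolding sum_eq_if_Piv[OF assms(3,4)] by (simp add: algebra_simps)
  then have "min (length xs - 1) (length ys - 1) \<le> n * (m + 1) div 2"
    unfolding of_nat_eq_iff by linarith
  moreover have "gdist n m v zerov \<le> enat (min (length xs - 1) (length ys - 1))"
    using gdist_le_path_length[OF xs(1)] gdist_le_path_length[OF ys(1)] by (simp add: min_def)
  ultimately have "gdist n m v zerov \<le> enat (n * (m + 1) div 2)"
    by (meson enat_ord_simps(1) order_trans)
  then show ?thesis
    using ps_eqI[OF xs len_xs] moment_le_wall_path_length[OF assms(2)]
      ps_eqI[OF ys len_ys] comoment_le_wall_path_length[OF assms(2)] by blast
qed

end
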